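(* Under the standing setting below, take $\rho(x,y)=\|\nabla h(x,y)\|^2$, let $\alpha>0$, $C_0>0$, and let $(x_0,y_0)$ satisfy $h(x_0,y_0)\le \alpha^2 C_0$. Let $\gamma>0$ satisfy $\gamma\le\min\{\alpha,\frac{1}{L_f+\alpha L_h}\}$ and let $\{(x_k,y_k,\lambda_k)\}_{k\ge0}$ be generated by the Algorithm. Then for every integer $K\ge1$, $$\frac1K\sum_{k=0}^{K-1}\big(\|\Delta_k^x\|^2+\|\Delta_k^y\|^2\big)\le \frac{4(f_0+\alpha^3C_0-\bar f)}{\gamma K}+\frac{2\alpha C_0}{\gamma L_h K}+2\alpha^2L_hC_f^2,$$ and $$\frac1K\sum_{k=0}^{K-1}\big(\|\nabla_x h_k\|^2+\|\nabla_y h_k\|^2\big)\le \frac{2\alpha C_0}{\gamma K}+\frac{2L_h(f_0+\alpha^3C_0-\bar f)}{\gamma K}+\alpha^2L_h^2C_f^2,$$ where $f_0=f(x_0,y_0)$.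
   Context: Standing setting. $f,g:\mathbb{R}^n\times\mathbb{R}^m\to\mathbb{R}$. $f$ is continuously differentiable, $\bar f:=\inf_{(x,y)}f(x,y)>-\infty$, $\nabla f$ is $L_f$-Lipschitz on $\mathbb{R}^{n+m}$, and $\|\nabla f(x,y)\|\le C_f$ for all $(x,y)$. $g$ is twice continuously differentiable, and $h(x,y):=\|\nabla_y g(x,y)\|^2$ is continuously differentiable with $\nabla h$ being $L_h$-Lipschitz ($L_h>0$). Write $\nabla h=(\nabla_x h,\nabla_y h)$ and, for a sequence $(x_k,y_k)$, $f_k=f(x_k,y_k)$, $h_k=h(x_k,y_k)$, $\nabla_x f_k=\nabla_x f(x_k,y_k)$, etc. Given a function $\rho:\mathbb{R}^n\times\mathbb{R}^m\to\mathbb{R}_{\ge0}$, parameters $\alpha,\gamma>0$ and a starting point $(x_0,y_0)$, the Algorithm iterates for $k\ge0$: $$\lambda_k=\frac{\big[-\nabla_x h_k^\top\nabla_x f_k-\nabla_y h_k^\top\nabla_y f_k+\alpha\rho(x_k,y_k)\big]_+}{\|\nabla_x h_k\|^2+\|\nabla_y h_k\|^2}\ \text{ if }\nabla h_k\neq0,\qquad \lambda_k=0\ \text{ if }\nabla h_k=0,$$ where $[t]_+=\max\{0,t\}$; then $\Delta_k^x=-\nabla_x f_k-\lambda_k\nabla_x h_k$, $\Delta_k^y=-\nabla_y f_k-\lambda_k\nabla_y h_k$, $x_{k+1}=x_k+\gamma\Delta_k^x$, $y_{k+1}=y_k+\gamma\Delta_k^y$. (Equivalently, $(\Delta_k^x,\Delta_k^y)$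 and $\lambda_k$ are the primal solution and multiplier of the QP $\min_{\Delta^x,\Delta^y}\frac12\|\Delta^x+\nabla_xf_k\|^2+\frac12\|\Delta^y+\nabla_yf_k\|^2$ s.t. $\nabla_xh_k^\top\Delta^x+\nabla_yh_k^\top\Delta^y+\alpha\rho(x_k,y_k)\le0$.) *)

theory Defs
  imports "HOL-Analysis.Analysis"
begin

text \<open>Points (x,y) are pairs in 'a \<times> 'b with 'a, 'b Euclidean spaces (R^n, R^m).
  Gradients are elements of 'a \<times> 'b; fst/snd give the x- and y-partial gradients.\<close>

text \<open>Multiplier lambda_k, given gf = grad f(x_k,y_k), gh = grad h(x_k,y_k), alpha, rho_k.\<close>
definition alg_lambda :: "('a::euclidean_space \<times> 'b::euclidean_space) \<Rightarrow> ('a \<times> 'b) \<Rightarrow> real \<Rightarrow> real \<Rightarrow> real" where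
  "alg_lambda gf gh \<alpha> r =
     (if gh = 0 then 0
      else max 0 (- (fst gh \<bullet> fst gf) - (snd gh \<bullet> snd gf) + \<alpha> * r)
             / (norm (fst gh) ^ 2 + norm (snd gh) ^ 2))"

definition alg_dx :: "('a::euclidean_space \<times> 'b::euclidean_space) \<Rightarrow> ('a \<times> 'b) \<Rightarrow> real \<Rightarrow> real \<Rightarrow> 'a" where
  "alg_dx gf gh \<alpha> r = - fst gf - alg_lambda gf gh \<alpha> r *\<^sub>R fst gh"

definition alg_dy :: "('a::euclidean_space \<times> 'b::euclidean_space) \<Rightarrow> ('a \<times> 'b) \<Rightarrow> real \<Rightarrow> real \<Rightarrow> 'b" where
  "alg_dy gf gh \<alpha> r = - snd gf - alg_lambda gf gh \<alpha> r *\<^sub>R snd gh"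

end

(*
  The step (\<Delta>\<^sup>x, \<Delta>\<^sup>y) satisfies the linearized constraint \<nabla>h \<bullet> \<Delta> \<le> -\<alpha> \<parallel>\<nabla>h\<parallel>\<^sup>2 and
  \<nabla>f \<bullet> \<Delta> + \<alpha> \<nabla>h \<bullet> \<Delta> \<le> -\<parallel>\<Delta>\<parallel>\<^sup>2 + \<alpha> \<parallel>\<nabla>h\<parallel> C\<^sub>f. With the descent lemma for f and h,
  the merit function f + (\<alpha> + 1/(2 L\<^sub>h \<alpha>)) h then drops by \<gamma> \<parallel>\<Delta>\<parallel>\<^sup>2 / 4 per step up to the
  constant \<gamma> \<alpha>\<^sup>2 L\<^sub>h C\<^sub>f\<^sup>2 / 2, and telescoping bounds \<Sigma> \<parallel>\<Delta>\<^sub>k\<parallel>\<^sup>2. The descent lemma for h alone,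
  where the constraint yields a decrease \<gamma> \<alpha> \<parallel>\<nabla>h\<parallel>\<^sup>2, telescopes to a bound on
  \<Sigma> \<parallel>\<nabla>h\<^sub>k\<parallel>\<^sup>2 in terms of the sum already controlled.
*)

theory Submission
  imports Defs
begin

lemma descent_lemma:
  fixes F :: "'c::real_inner \<Rightarrow> real"
  assumes deriv: "\<And>p. (F has_derivative (\<lambda>v. DF p \<bullet> v)) (at p)"
    and lip: "\<And>p q. norm (DF p - DF q) \<le> L * norm (p - q)"
  shows "F (p + v) \<le> F p + DF p \<bullet> v + L / 2 * (norm v)\<^sup>2"
proof -
  define \<psi> where "\<psi> t = F (p + t *\<^sub>R v) - t * (DF p \<bullet> v) - L / 2 * t\<^sup>2 * (norm v)\<^sup>2" for t
  define \<psi>' where "\<psi>' t = (DF (p + t *\<^sub>R v) - DF p) \<bullet> v - L * t * (norm v)\<^sup>2" for t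
  have "DERIV \<psi> t :> \<psi>' t" for t
  proof -
    have "((\<lambda>t. p + t *\<^sub>R v) has_derivative (\<lambda>s. s *\<^sub>R v)) (at t)"
      by (auto intro!: derivative_eq_intros)
    from has_derivative_compose[OF this deriv]
    have "((\<lambda>t. F (p + t *\<^sub>R v)) has_real_derivative (DF (p + t *\<^sub>R v) \<bullet> v)) (at t)"
      by (rule has_derivative_imp_has_field_derivative) simp
    then show ?thesis unfolding \<psi>_def \<psi>'_def
      by (auto intro!: derivative_eq_intros simp: power2_eq_square inner_diff_left)
  qed
  then obtain z where z: "0 < z" "z < 1" "\<psi> 1 - \<psi> 0 = \<psi>' z"
    using MVT2[of 0 1 \<psi> \<psi>'] by auto
  have "(DF (p + z *\<^sub>R v) - DF p) \<bullet> v \<le> norm (DF (p + z *\<^sub>R v) - DF p) * norm v"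
    by (rule norm_cauchy_schwarz)
  also have "\<dots> \<le> L * norm (z *\<^sub>R v) * norm v"
    using lip[of "p + z *\<^sub>R v" p] by (simp add: mult_right_mono)
  also have "\<dots> = L * z * (norm v)\<^sup>2"
    using z by (simp add: power2_eq_square)
  finally have "\<psi>' z \<le> 0" unfolding \<psi>'_def by simp
  then show ?thesis using z unfolding \<psi>_def by simp
qed

lemma power2_norm_prod: "(norm p)\<^sup>2 = (norm (fst p))\<^sup>2 + (norm (snd p))\<^sup>2"
  by (simp add: norm_prod_def)

definition alg_step ::
    "('a::euclidean_space \<times> 'b::euclidean_space) \<Rightarrow> ('a \<times> 'b) \<Rightarrow> real \<Rightarrow> real \<Rightarrow> 'a \<times> 'b"
  where
  "alg_step G A \<alpha> r = (alg_dx G A \<alpha> r, alg_dy G A \<alpha> r)"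

lemma alg_step_eq: "alg_step G A \<alpha> r = - G - alg_lambda G A \<alpha> r *\<^sub>R A"
  unfolding alg_step_def alg_dx_def alg_dy_def by (simp add: prod_eq_iff)

lemma alg_lambda_eq:
  assumes "A \<noteq> 0"
  shows "alg_lambda G A \<alpha> r = max 0 (- (A \<bullet> G) + \<alpha> * r) / (norm A)\<^sup>2"
  using assms by (simp add: alg_lambda_def inner_prod_def power2_norm_prod)

lemma inner_alg_step:
  "A \<bullet> alg_step G A \<alpha> r = - (A \<bullet> G) - alg_lambda G A \<alpha> r * (norm A)\<^sup>2"
  by (simp add: alg_step_eq inner_diff_right power2_norm_eq_inner)

lemma inner_alg_step_le: "A \<bullet> alg_step G A \<alpha> ((norm A)\<^sup>2) \<le> - \<alpha> * (norm A)\<^sup>2"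
proof (cases "A = 0")
  case False
  then have "alg_lambda G A \<alpha> ((norm A)\<^sup>2) * (norm A)\<^sup>2 = max 0 (- (A \<bullet> G) + \<alpha> * (norm A)\<^sup>2)"
    by (simp add: alg_lambda_eq)
  then show ?thesis by (simp add: inner_alg_step)
qed (simp add: alg_step_eq)

text \<open>Since \<open>G = - D - \<lambda> A\<close>, the left-hand side equals \<open>- \<parallel>D\<parallel>\<^sup>2 + (\<alpha> - \<lambda>) (A \<bullet> D)\<close>;
  the multiplier is either zero or makes the constraint active.\<close>
lemma inner_alg_step_merit_le:
  fixes G A :: "'a::euclidean_space \<times> 'b::euclidean_space"
  assumes "\<alpha> \<ge> 0"
  defines "D \<equiv> alg_step G A \<alpha> ((norm A)\<^sup>2)"
  shows "G \<bullet> D + \<alpha> * (A \<bullet> D) \<le> - (norm D)\<^sup>2 + \<alpha> * norm A * norm G"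
proof -
  define lam where "lam = alg_lambda G A \<alpha> ((norm A)\<^sup>2)"
  have "G = - D - lam *\<^sub>R A" unfolding D_def lam_def alg_step_eq by simp
  then have GD: "G \<bullet> D = - (norm D)\<^sup>2 - lam * (A \<bullet> D)"
    by (simp add: inner_diff_left inner_diff_right power2_norm_eq_inner inner_commute)
  have AD: "A \<bullet> D = - (A \<bullet> G) - lam * (norm A)\<^sup>2"
    unfolding D_def lam_def by (rule inner_alg_step)
  have cs: "\<alpha> * - (A \<bullet> G) \<le> \<alpha> * (norm A * norm G)"
    using norm_cauchy_schwarz[of "- A" G] assms by (intro mult_left_mono) auto
  have "(\<alpha> - lam) * (A \<bullet> D) \<le> \<alpha> * - (A \<bullet> G)"
  proof (cases "A = 0 \<or> lam = 0")
    case True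
    then show ?thesis using AD by auto
  next
    case False
    then have active: "lam * (norm A)\<^sup>2 = - (A \<bullet> G) + \<alpha> * (norm A)\<^sup>2"
      by (auto simp: lam_def alg_lambda_eq max_def split: if_splits)
    have "(\<alpha> - lam) * (A \<bullet> D) = \<alpha> * (lam * (norm A)\<^sup>2) - \<alpha> * (\<alpha> * (norm A)\<^sup>2)"
      using AD active by (simp add: algebra_simps)
    then show ?thesis using active by (simp add: algebra_simps)
  qed
  then show ?thesis using GD cs by (simp add: algebra_simps)
qed

lemma mult_le_weighted_sum_sq:
  fixes a b L :: real
  assumes "L > 0"
  shows "a * b \<le> a\<^sup>2 / (2 * L) + L * b\<^sup>2 / 2"
proof -
  have "0 \<le> (a - L * b)\<^sup>2" by simp
  then have "2 * L * (a * b) \<le> a\<^sup>2 + L\<^sup>2 * b\<^sup>2"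
    by (simp add: power2_eq_square algebra_simps)
  then show ?thesis using assms by (simp add: field_simps power2_eq_square)
qed

text \<open>The weight \<open>1 / (2 L\<^sub>h \<alpha>)\<close> on \<open>h\<close> is chosen so that the resulting decrease
  \<open>\<gamma> \<parallel>\<nabla>h\<parallel>\<^sup>2 / (2 L\<^sub>h)\<close> absorbs the cross term \<open>\<gamma> \<alpha> \<parallel>\<nabla>h\<parallel> C\<^sub>f\<close> by Young's inequality.\<close>
definition merit :: "('c \<Rightarrow> real) \<Rightarrow> ('c \<Rightarrow> real) \<Rightarrow> real \<Rightarrow> real \<Rightarrow> 'c \<Rightarrow> real" where
  "merit f h \<alpha> Lh p = f p + (\<alpha> + 1 / (2 * Lh * \<alpha>)) * h p"

lemma merit_decrease:
  fixes f h :: "'c::real_inner \<Rightarrow> real"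
  assumes f_grad: "\<And>p. (f has_derivative (\<lambda>v. Df p \<bullet> v)) (at p)"
    and f_lip: "\<And>p q. norm (Df p - Df q) \<le> Lf * norm (p - q)"
    and h_grad: "\<And>p. (h has_derivative (\<lambda>v. Dh p \<bullet> v)) (at p)"
    and h_lip: "\<And>p q. norm (Dh p - Dh q) \<le> Lh * norm (p - q)"
    and pos: "\<alpha> > 0" "Lh > 0" "\<gamma> > 0"
    and step: "\<gamma> \<le> \<alpha>" "(Lf + \<alpha> * Lh) * \<gamma> \<le> 1"
    and feasible: "Dh p \<bullet> d \<le> - \<alpha> * (norm (Dh p))\<^sup>2"
    and descent: "Df p \<bullet> d + \<alpha> * (Dh p \<bullet> d) \<le> - (norm d)\<^sup>2 + \<alpha> * norm (Dh p) * norm (Df p)"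
    and Df_bound: "norm (Df p) \<le> Cf"
  shows "merit f h \<alpha> Lh (p + \<gamma> *\<^sub>R d) + \<gamma> / 4 * (norm d)\<^sup>2
           \<le> merit f h \<alpha> Lh p + \<gamma> * \<alpha>\<^sup>2 * Lh * Cf\<^sup>2 / 2"
proof -
  define c where "c = 1 / (2 * Lh * \<alpha>)"
  define n where "n = (norm d)\<^sup>2"
  define a where "a = norm (Dh p)"
  have c_pos: "c > 0" using pos by (simp add: c_def)
  have n_nonneg: "n \<ge> 0" by (simp add: n_def)
  have f_step: "f (p + \<gamma> *\<^sub>R d) \<le> f p + \<gamma> * (Df p \<bullet> d) + Lf / 2 * \<gamma>\<^sup>2 * n"
    using descent_lemma[OF f_grad f_lip, of p "\<gamma> *\<^sub>R d"] pos
    by (simp add: n_def power_mult_distrib)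
  have h_step: "h (p + \<gamma> *\<^sub>R d) \<le> h p + \<gamma> * (Dh p \<bullet> d) + Lh / 2 * \<gamma>\<^sup>2 * n"
    using descent_lemma[OF h_grad h_lip, of p "\<gamma> *\<^sub>R d"] pos
    by (simp add: n_def power_mult_distrib)
  have "merit f h \<alpha> Lh (p + \<gamma> *\<^sub>R d)
      \<le> f p + \<gamma> * (Df p \<bullet> d) + Lf / 2 * \<gamma>\<^sup>2 * n
         + (\<alpha> + c) * (h p + \<gamma> * (Dh p \<bullet> d) + Lh / 2 * \<gamma>\<^sup>2 * n)"
    unfolding merit_def c_def[symmetric]
    by (intro add_mono f_step mult_left_mono h_step) (use pos c_pos in auto)
  also have "\<dots> = merit f h \<alpha> Lh p + \<gamma> * (Df p \<bullet> d + \<alpha> * (Dh p \<bullet> d))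
      + (Lf + \<alpha> * Lh) * \<gamma> * (\<gamma> * n) / 2 + c * \<gamma> * (Dh p \<bullet> d) + c * Lh / 2 * \<gamma>\<^sup>2 * n"
    unfolding merit_def c_def[symmetric] by (simp add: field_simps power2_eq_square)
  also have "\<dots> \<le> merit f h \<alpha> Lh p + \<gamma> * (- n + \<alpha> * a * Cf)
      + \<gamma> * n / 2 + c * \<gamma> * (- \<alpha> * a\<^sup>2) + \<gamma> * (\<gamma> / (4 * \<alpha>)) * n"
  proof -
    have "\<alpha> * a * norm (Df p) \<le> \<alpha> * a * Cf"
      using Df_bound pos by (intro mult_left_mono) (auto simp: a_def)
    then have "Df p \<bullet> d + \<alpha> * (Dh p \<bullet> d) \<le> - n + \<alpha> * a * Cf"
      using descent unfolding n_def a_def by linarith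
    then have "\<gamma> * (Df p \<bullet> d + \<alpha> * (Dh p \<bullet> d)) \<le> \<gamma> * (- n + \<alpha> * a * Cf)"
      by (rule mult_left_mono) (use pos in auto)
    moreover have "(Lf + \<alpha> * Lh) * \<gamma> * (\<gamma> * n) / 2 \<le> \<gamma> * n / 2"
      using mult_right_mono[OF step(2), of "\<gamma> * n"] pos n_nonneg by simp
    moreover have "c * \<gamma> * (Dh p \<bullet> d) \<le> c * \<gamma> * (- \<alpha> * a\<^sup>2)"
      using feasible pos c_pos unfolding a_def by (intro mult_left_mono) auto
    moreover have "c * Lh / 2 * \<gamma>\<^sup>2 * n = \<gamma> * (\<gamma> / (4 * \<alpha>)) * n"
      using pos by (simp add: c_def field_simps power2_eq_square)
    ultimately show ?thesis by linarith
  qed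
  also have "\<dots> \<le> merit f h \<alpha> Lh p - \<gamma> / 4 * n + \<gamma> * (\<alpha> * Cf * a - a\<^sup>2 / (2 * Lh))"
  proof -
    have "\<gamma> / (4 * \<alpha>) \<le> 1 / 4" using step(1) pos by (simp add: field_simps)
    then have "\<gamma> * (\<gamma> / (4 * \<alpha>)) * n \<le> \<gamma> * (1 / 4) * n"
      using pos n_nonneg by (intro mult_right_mono mult_left_mono) auto
    moreover have "c * \<gamma> * (- \<alpha> * a\<^sup>2) = - \<gamma> * a\<^sup>2 / (2 * Lh)"
      using pos by (simp add: c_def field_simps)
    ultimately show ?thesis by (simp add: algebra_simps)
  qed
  also have "\<dots> \<le> merit f h \<alpha> Lh p - \<gamma> / 4 * n + \<gamma> * \<alpha>\<^sup>2 * Lh * Cf\<^sup>2 / 2"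
  proof -
    have "\<alpha> * Cf * a - a\<^sup>2 / (2 * Lh) \<le> \<alpha>\<^sup>2 * Lh * Cf\<^sup>2 / 2"
      using mult_le_weighted_sum_sq[OF pos(2), of a "\<alpha> * Cf"]
      by (simp add: algebra_simps power_mult_distrib)
    then show ?thesis using pos by (simp add: mult_left_mono)
  qed
  finally show ?thesis unfolding n_def by simp
qed

lemma sum_telescope_le:
  fixes u a b :: "nat \<Rightarrow> real"
  assumes "\<And>k. u (Suc k) + a k \<le> u k + b k"
  shows "u n + (\<Sum>k<n. a k) \<le> u 0 + (\<Sum>k<n. b k)"
proof (induction n)
  case (Suc n)
  then show ?case using assms[of n] by simp
qed simp

lemma iterates_sum_bounds:
  fixes f h :: "'c::real_inner \<Rightarrow> real" and P d :: "nat \<Rightarrow> 'c"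
  assumes f_grad: "\<And>p. (f has_derivative (\<lambda>v. Df p \<bullet> v)) (at p)"
    and f_lip: "\<And>p q. norm (Df p - Df q) \<le> Lf * norm (p - q)"
    and f_bdd: "bdd_below (range f)"
    and Df_bound: "\<And>p. norm (Df p) \<le> Cf"
    and h_grad: "\<And>p. (h has_derivative (\<lambda>v. Dh p \<bullet> v)) (at p)"
    and h_lip: "\<And>p q. norm (Dh p - Dh q) \<le> Lh * norm (p - q)"
    and h_nonneg: "\<And>p. h p \<ge> 0"
    and pos: "\<alpha> > 0" "Lh > 0" "\<gamma> > 0"
    and step: "\<gamma> \<le> \<alpha>" "(Lf + \<alpha> * Lh) * \<gamma> \<le> 1"
    and P_Suc: "\<And>k. P (Suc k) = P k + \<gamma> *\<^sub>R d k"
    and feasible: "\<And>k. Dh (P k) \<bullet> d k \<le> - \<alpha> * (norm (Dh (P k)))\<^sup>2"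
    and descent: "\<And>k. Df (P k) \<bullet> d k + \<alpha> * (Dh (P k) \<bullet> d k)
                    \<le> - (norm (d k))\<^sup>2 + \<alpha> * norm (Dh (P k)) * norm (Df (P k))"
  shows "\<gamma> / 4 * (\<Sum>k<K. (norm (d k))\<^sup>2)
           \<le> merit f h \<alpha> Lh (P 0) - Inf (range f) + real K * (\<gamma> * \<alpha>\<^sup>2 * Lh * Cf\<^sup>2 / 2)"
    and "\<gamma> * \<alpha> * (\<Sum>k<K. (norm (Dh (P k)))\<^sup>2) \<le> h (P 0) + Lh / 2 * \<gamma>\<^sup>2 * (\<Sum>k<K. (norm (d k))\<^sup>2)"
proof -
  have "merit f h \<alpha> Lh (P (Suc k)) + \<gamma> / 4 * (norm (d k))\<^sup>2
      \<le> merit f h \<alpha> Lh (P k) + \<gamma> * \<alpha>\<^sup>2 * Lh * Cf\<^sup>2 / 2" for k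
    unfolding P_Suc
    by (rule merit_decrease[OF f_grad f_lip h_grad h_lip pos step feasible descent Df_bound])
  from sum_telescope_le[where u = "\<lambda>k. merit f h \<alpha> Lh (P k)", OF this, of K]
  have "merit f h \<alpha> Lh (P K) + \<gamma> / 4 * (\<Sum>k<K. (norm (d k))\<^sup>2)
      \<le> merit f h \<alpha> Lh (P 0) + real K * (\<gamma> * \<alpha>\<^sup>2 * Lh * Cf\<^sup>2 / 2)"
    by (simp add: sum_distrib_left)
  moreover have "Inf (range f) \<le> merit f h \<alpha> Lh (P K)"
    unfolding merit_def using f_bdd h_nonneg[of "P K"] pos
    by (intro add_increasing2 mult_nonneg_nonneg cInf_lower) auto
  ultimately show "\<gamma> / 4 * (\<Sum>k<K. (norm (d k))\<^sup>2)
           \<le> merit f h \<alpha> Lh (P 0) - Inf (range f) + real K * (\<gamma> * \<alpha>\<^sup>2 * Lh * Cf\<^sup>2 / 2)"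
    by linarith
  have "h (P (Suc k)) + \<gamma> * \<alpha> * (norm (Dh (P k)))\<^sup>2 \<le> h (P k) + Lh / 2 * \<gamma>\<^sup>2 * (norm (d k))\<^sup>2" for k
  proof -
    have "\<gamma> * (Dh (P k) \<bullet> d k) \<le> \<gamma> * (- \<alpha> * (norm (Dh (P k)))\<^sup>2)"
      using feasible pos by (intro mult_left_mono) auto
    then show ?thesis
      using descent_lemma[OF h_grad h_lip, of "P k" "\<gamma> *\<^sub>R d k"] pos
      unfolding P_Suc by (simp add: power_mult_distrib)
  qed
  from sum_telescope_le[where u = "\<lambda>k. h (P k)", OF this, of K]
  show "\<gamma> * \<alpha> * (\<Sum>k<K. (norm (Dh (P k)))\<^sup>2) \<le> h (P 0) + Lh / 2 * \<gamma>\<^sup>2 * (\<Sum>k<K. (norm (d k))\<^sup>2)"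
    using h_nonneg[of "P K"] by (simp add: sum_distrib_left)
qed

lemma averaged_bounds:
  fixes S1 S2 M \<alpha> \<gamma> Lh Cf C0 :: real and K :: nat
  assumes K: "K \<ge> 1" and pos: "\<alpha> > 0" "\<gamma> > 0" "Lh > 0" "C0 > 0" "M \<ge> 0"
    and "\<gamma> \<le> \<alpha>"
    and S1: "\<gamma> / 4 * S1 \<le> M + \<alpha> * C0 / (2 * Lh) + real K * (\<gamma> * \<alpha>\<^sup>2 * Lh * Cf\<^sup>2 / 2)"
    and S2: "\<gamma> * \<alpha> * S2 \<le> \<alpha>\<^sup>2 * C0 + Lh / 2 * \<gamma>\<^sup>2 * S1"
  shows "1 / real K * S1 \<le> 4 * M / (\<gamma> * real K) + 2 * \<alpha> * C0 / (\<gamma> * Lh * real K)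
           + 2 * \<alpha>\<^sup>2 * Lh * Cf\<^sup>2"
    and "1 / real K * S2 \<le> 2 * \<alpha> * C0 / (\<gamma> * real K) + 2 * Lh * M / (\<gamma> * real K)
           + \<alpha>\<^sup>2 * Lh\<^sup>2 * Cf\<^sup>2"
proof -
  have K_pos: "real K > 0" using K by simp
  define B where "B = 4 * M / \<gamma> + 2 * \<alpha> * C0 / (\<gamma> * Lh) + real K * (2 * \<alpha>\<^sup>2 * Lh * Cf\<^sup>2)"
  have S1_le: "S1 \<le> B"
  proof -
    have "S1 \<le> 4 / \<gamma> * (M + \<alpha> * C0 / (2 * Lh) + real K * (\<gamma> * \<alpha>\<^sup>2 * Lh * Cf\<^sup>2 / 2))"
      using S1 pos by (simp add: field_simps)
    also have "\<dots> = B" using pos unfolding B_def by (simp add: field_simps)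
    finally show ?thesis .
  qed
  then show "1 / real K * S1 \<le> 4 * M / (\<gamma> * real K) + 2 * \<alpha> * C0 / (\<gamma> * Lh * real K)
           + 2 * \<alpha>\<^sup>2 * Lh * Cf\<^sup>2"
    using K_pos unfolding B_def by (simp add: field_simps)
  have "S2 \<le> \<alpha> * C0 / \<gamma> + Lh * \<gamma> / (2 * \<alpha>) * S1"
    using S2 pos by (simp add: field_simps power2_eq_square)
  also have "\<dots> \<le> \<alpha> * C0 / \<gamma> + Lh * \<gamma> / (2 * \<alpha>) * B"
    using S1_le pos by (intro add_left_mono mult_left_mono) auto
  also have "\<dots> = \<alpha> * C0 / \<gamma> + C0 + 2 * Lh * M / \<alpha> + real K * (\<gamma> * \<alpha> * Lh\<^sup>2 * Cf\<^sup>2)"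
    using pos unfolding B_def by (simp add: field_simps power2_eq_square)
  also have "\<dots> \<le> 2 * \<alpha> * C0 / \<gamma> + 2 * Lh * M / \<gamma> + real K * (\<alpha>\<^sup>2 * Lh\<^sup>2 * Cf\<^sup>2)"
  proof -
    have "C0 \<le> \<alpha> * C0 / \<gamma>" using pos \<open>\<gamma> \<le> \<alpha>\<close> by (simp add: field_simps)
    moreover have "2 * Lh * M / \<alpha> \<le> 2 * Lh * M / \<gamma>"
      using pos \<open>\<gamma> \<le> \<alpha>\<close> by (intro divide_left_mono) auto
    moreover have "real K * (\<gamma> * \<alpha> * Lh\<^sup>2 * Cf\<^sup>2) \<le> real K * (\<alpha>\<^sup>2 * Lh\<^sup>2 * Cf\<^sup>2)"
      using pos \<open>\<gamma> \<le> \<alpha>\<close>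
      by (intro mult_left_mono mult_right_mono) (auto simp: power2_eq_square)
    moreover have "2 * \<alpha> * C0 / \<gamma> = \<alpha> * C0 / \<gamma> + \<alpha> * C0 / \<gamma>" by simp
    ultimately show ?thesis by argo
  qed
  finally show "1 / real K * S2 \<le> 2 * \<alpha> * C0 / (\<gamma> * real K) + 2 * Lh * M / (\<gamma> * real K)
           + \<alpha>\<^sup>2 * Lh\<^sup>2 * Cf\<^sup>2"
    using K_pos by (simp add: field_simps)
qed

theorem theorem1:
  fixes f g h :: "'a::euclidean_space \<times> 'b::euclidean_space \<Rightarrow> real"
    and Df Dg Dh :: "'a \<times> 'b \<Rightarrow> 'a \<times> 'b"
    and D2g :: "'a \<times> 'b \<Rightarrow> ('a \<times> 'b) \<Rightarrow>\<^sub>L ('a \<times> 'b)"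
    and rho :: "'a \<times> 'b \<Rightarrow> real"
    and Lf Lh Cf \<alpha> \<gamma> C0 :: real
    and x0 :: 'a and y0 :: 'b
    and xs :: "nat \<Rightarrow> 'a" and ys :: "nat \<Rightarrow> 'b"
    and K :: nat
  assumes f_grad: "\<And>p. (f has_derivative (\<lambda>v. Df p \<bullet> v)) (at p)"
    and f_bdd: "bdd_below (range f)"
    and f_lip: "\<And>p q. norm (Df p - Df q) \<le> Lf * norm (p - q)"
    and f_bound: "\<And>p. norm (Df p) \<le> Cf"
    and g_grad: "\<And>p. (g has_derivative (\<lambda>v. Dg p \<bullet> v)) (at p)"
    and g_hess: "\<And>p. (Dg has_derivative blinfun_apply (D2g p)) (at p)"
    and g_C2: "continuous_on UNIV D2g"
    and h_def: "\<And>p. h p = (norm (snd (Dg p)))\<^sup>2"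
    and h_grad: "\<And>p. (h has_derivative (\<lambda>v. Dh p \<bullet> v)) (at p)"
    and h_lip: "\<And>p q. norm (Dh p - Dh q) \<le> Lh * norm (p - q)"
    and Lh_pos: "Lh > 0"
    and rho_def: "\<And>p. rho p = (norm (Dh p))\<^sup>2"
    and alpha_pos: "\<alpha> > 0"
    and C0_pos: "C0 > 0"
    and h0: "h (x0, y0) \<le> \<alpha>\<^sup>2 * C0"
    and gamma_pos: "\<gamma> > 0"
    and gamma_le: "\<gamma> \<le> min \<alpha> (1 / (Lf + \<alpha> * Lh))"
    and init_x: "xs 0 = x0" and init_y: "ys 0 = y0"
    and step_x: "\<And>k. xs (Suc k) = xs k + \<gamma> *\<^sub>R
        alg_dx (Df (xs k, ys k)) (Dh (xs k, ys k)) \<alpha> (rho (xs k, ys k))"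
    and step_y: "\<And>k. ys (Suc k) = ys k + \<gamma> *\<^sub>R
        alg_dy (Df (xs k, ys k)) (Dh (xs k, ys k)) \<alpha> (rho (xs k, ys k))"
    and K_ge: "K \<ge> 1"
  shows "((1 / real K) * (\<Sum>k<K.
            (norm (alg_dx (Df (xs k, ys k)) (Dh (xs k, ys k)) \<alpha> (rho (xs k, ys k))))\<^sup>2
          + (norm (alg_dy (Df (xs k, ys k)) (Dh (xs k, ys k)) \<alpha> (rho (xs k, ys k))))\<^sup>2)
         \<le> 4 * (f (x0, y0) + \<alpha> ^ 3 * C0 - Inf (range f)) / (\<gamma> * real K)
           + 2 * \<alpha> * C0 / (\<gamma> * Lh * real K) + 2 * \<alpha>\<^sup>2 * Lh * Cf\<^sup>2)
       \<and> ((1 / real K) * (\<Sum>k<K.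
            (norm (fst (Dh (xs k, ys k))))\<^sup>2 + (norm (snd (Dh (xs k, ys k))))\<^sup>2)
         \<le> 2 * \<alpha> * C0 / (\<gamma> * real K)
           + 2 * Lh * (f (x0, y0) + \<alpha> ^ 3 * C0 - Inf (range f)) / (\<gamma> * real K)
           + \<alpha>\<^sup>2 * Lh\<^sup>2 * Cf\<^sup>2)"
proof -
  define P where "P k = (xs k, ys k)" for k
  define d where "d k = alg_step (Df (P k)) (Dh (P k)) \<alpha> ((norm (Dh (P k)))\<^sup>2)" for k
  define M where "M = f (x0, y0) + \<alpha> ^ 3 * C0 - Inf (range f)"
  have P_Suc: "P (Suc k) = P k + \<gamma> *\<^sub>R d k" for k
    using step_x step_y by (simp add: P_def d_def alg_step_def rho_def)
  have "Lf + \<alpha> * Lh > 0"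
    using gamma_le gamma_pos zero_less_divide_1_iff[of "Lf + \<alpha> * Lh"] by linarith
  then have step_size: "\<gamma> \<le> \<alpha>" "(Lf + \<alpha> * Lh) * \<gamma> \<le> 1"
    using gamma_le by (auto simp: field_simps)
  have h_nonneg: "h p \<ge> 0" for p by (simp add: h_def)
  have feasible: "Dh (P k) \<bullet> d k \<le> - \<alpha> * (norm (Dh (P k)))\<^sup>2" for k
    unfolding d_def by (rule inner_alg_step_le)
  have descent: "Df (P k) \<bullet> d k + \<alpha> * (Dh (P k) \<bullet> d k)
      \<le> - (norm (d k))\<^sup>2 + \<alpha> * norm (Dh (P k)) * norm (Df (P k))" for k
    unfolding d_def by (rule inner_alg_step_merit_le) (use alpha_pos in simp)
  note sums = iterates_sum_bounds[where K = K and P = P and d = d and Df = Df and Dh = Dh,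
      OF f_grad f_lip f_bdd f_bound h_grad h_lip h_nonneg alpha_pos Lh_pos gamma_pos step_size
      P_Suc feasible descent]
  have P0: "P 0 = (x0, y0)" by (simp add: P_def init_x init_y)
  have "merit f h \<alpha> Lh (P 0) \<le> f (x0, y0) + (\<alpha> + 1 / (2 * Lh * \<alpha>)) * (\<alpha>\<^sup>2 * C0)"
    unfolding merit_def P0 using h0 alpha_pos Lh_pos by (intro add_left_mono mult_left_mono) auto
  also have "\<dots> = f (x0, y0) + \<alpha> ^ 3 * C0 + \<alpha> * C0 / (2 * Lh)"
    using alpha_pos Lh_pos by (simp add: field_simps power2_eq_square power3_eq_cube)
  finally have S1_bound: "\<gamma> / 4 * (\<Sum>k<K. (norm (d k))\<^sup>2)
      \<le> M + \<alpha> * C0 / (2 * Lh) + real K * (\<gamma> * \<alpha>\<^sup>2 * Lh * Cf\<^sup>2 / 2)"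
    using sums(1) unfolding M_def by linarith
  have M_nonneg: "M \<ge> 0"
    using cInf_lower[OF rangeI f_bdd, of "(x0, y0)"] alpha_pos C0_pos unfolding M_def
    by (smt (verit) mult_pos_pos zero_less_power)
  show ?thesis
    using averaged_bounds[OF K_ge alpha_pos gamma_pos Lh_pos C0_pos M_nonneg step_size(1)
        S1_bound sums(2)[unfolded P0, THEN order.trans, OF add_right_mono[OF h0]]]
    by (simp add: M_def d_def P_def rho_def alg_step_def power2_norm_prod)
qed

end
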